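(* If $G$ is a graph on $n$ vertices with vertex connectivity $\kappa$, then $\operatorname{th}_{\operatorname{H}}(G)\geq \lceil 2\sqrt{n-\kappa}+\kappa-1\rceil$.
   Context: All graphs are finite, simple and undirected; vertex connectivity follows the usual convention ($\kappa(K_n)=n-1$, and $\kappa=0$ for disconnected graphs). Hopping color change rule: a blue vertex $v$ may force a white vertex $w$ to become blue if $v$ has not previously performed a force and every neighbor of $v$ is blue. For an initial blue set $B$, a chronological list of forces of $B$ is a sequence of such forces applied one at a time until no further force is possible; its underlying unordered set is a set of forces of $B$. $B$ is a hopping forcing set if some chronological list of forces of $B$ turns all vertices blue. For a set of forces $\mathcal F$ of $B$, let $\mathcal F^{(0)}=B$ and for $t\geq1$ let $\mathcal F^{(t)}$ be the set of vertices $w\notin U_{t-1}:=\bigcup_{i=0}^{t-1}\mathcal F^{(i)}$ for which there is $(v\to w)\in\mathcal F$ with $v\in U_{t-1}$ and all neighbors of $v$ in $U_{t-1}$. $\operatorname{pt}_{\operatorname{H}}(G;\mathcal F)$ is the least $t$ with $\bigcup_{i=0}^t\mathcal F^{(i)}=V(G)$ ($\infty$ if none); $\operatorname{pt}_{\operatorname{H}}(G;B)$ is the minimum of $\operatorname{pt}_{\operatorname{H}}(G;\mathcal F)$ over sets of forces $\mathcal F$ of $B$ ($\infty$ if $B$ is not a hopping forcing set). The hopping throttling number is $\operatorname{th}_{\operatorname{H}}(G)=\min_{B\subseteq V(G)}\big(|B|+\operatorname{pt}_{\operatorname{H}}(G;B)\big)$. *)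

theory Defs
  imports Complex_Main "HOL-Library.Extended_Nat"
begin

definition simple_graph :: "'a set \<Rightarrow> ('a \<Rightarrow> 'a \<Rightarrow> bool) \<Rightarrow> bool" where
  "simple_graph V E \<longleftrightarrow> finite V \<and> (\<forall>u v. E u v \<longrightarrow> u \<in> V \<and> v \<in> V)
     \<and> (\<forall>u v. E u v \<longrightarrow> E v u) \<and> (\<forall>v. \<not> E v v)"

definition connected_on :: "'a set \<Rightarrow> ('a \<Rightarrow> 'a \<Rightarrow> bool) \<Rightarrow> bool" where
  "connected_on W E \<longleftrightarrow>
     (\<forall>u\<in>W. \<forall>v\<in>W. (\<lambda>x y. x \<in> W \<and> y \<in> W \<and> E x y)\<^sup>*\<^sup>* u v)"

text \<open>Vertex connectivity: least number of vertices whose removal leaves a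
  disconnected graph or at most one vertex (so kappa(K_n) = n-1, kappa = 0 if disconnected).\<close>
definition vertex_connectivity :: "'a set \<Rightarrow> ('a \<Rightarrow> 'a \<Rightarrow> bool) \<Rightarrow> nat" where
  "vertex_connectivity V E = (LEAST k. \<exists>S \<subseteq> V. card S = k \<and>
       (\<not> connected_on (V - S) E \<or> card (V - S) \<le> 1))"

text \<open>One hopping force v \<rightarrow> w is possible when the blue set is S and the set of
  vertices that already performed a force is D.\<close>
definition hop_step :: "'a set \<Rightarrow> ('a \<Rightarrow> 'a \<Rightarrow> bool) \<Rightarrow> 'a set \<Rightarrow> 'a set \<Rightarrow> 'a \<Rightarrow> 'a \<Rightarrow> bool" where
  "hop_step V E S D v w \<longleftrightarrow> v \<in> S \<and> v \<notin> D \<and> w \<in> V \<and> w \<notin> S \<and> (\<forall>u. E v u \<longrightarrow> u \<in> S)"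

definition can_hop :: "'a set \<Rightarrow> ('a \<Rightarrow> 'a \<Rightarrow> bool) \<Rightarrow> 'a set \<Rightarrow> 'a set \<Rightarrow> bool" where
  "can_hop V E S D \<longleftrightarrow> (\<exists>v w. hop_step V E S D v w)"

fun hop_valid :: "'a set \<Rightarrow> ('a \<Rightarrow> 'a \<Rightarrow> bool) \<Rightarrow> 'a set \<Rightarrow> 'a set \<Rightarrow> ('a \<times> 'a) list \<Rightarrow> bool" where
  "hop_valid V E S D [] = True"
| "hop_valid V E S D ((v, w) # fs) =
     (hop_step V E S D v w \<and> hop_valid V E (insert w S) (insert v D) fs)"

definition chron_list :: "'a set \<Rightarrow> ('a \<Rightarrow> 'a \<Rightarrow> bool) \<Rightarrow> 'a set \<Rightarrow> ('a \<times> 'a) list \<Rightarrow> bool" where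
  "chron_list V E B fs \<longleftrightarrow> hop_valid V E B {} fs \<and>
     \<not> can_hop V E (B \<union> snd ` set fs) (fst ` set fs)"

definition set_of_forces :: "'a set \<Rightarrow> ('a \<Rightarrow> 'a \<Rightarrow> bool) \<Rightarrow> 'a set \<Rightarrow> ('a \<times> 'a) set \<Rightarrow> bool" where
  "set_of_forces V E B F \<longleftrightarrow> (\<exists>fs. chron_list V E B fs \<and> F = set fs)"

definition hopping_forcing_set :: "'a set \<Rightarrow> ('a \<Rightarrow> 'a \<Rightarrow> bool) \<Rightarrow> 'a set \<Rightarrow> bool" where
  "hopping_forcing_set V E B \<longleftrightarrow> (\<exists>fs. chron_list V E B fs \<and> B \<union> snd ` set fs = V)"

text \<open>U t = F^(0) \<union> ... \<union> F^(t).\<close>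
fun hop_U :: "('a \<Rightarrow> 'a \<Rightarrow> bool) \<Rightarrow> 'a set \<Rightarrow> ('a \<times> 'a) set \<Rightarrow> nat \<Rightarrow> 'a set" where
  "hop_U E B F 0 = B"
| "hop_U E B F (Suc t) = hop_U E B F t \<union>
     {w. w \<notin> hop_U E B F t \<and> (\<exists>v. (v, w) \<in> F \<and> v \<in> hop_U E B F t \<and>
            (\<forall>u. E v u \<longrightarrow> u \<in> hop_U E B F t))}"

definition pt_H_forces :: "'a set \<Rightarrow> ('a \<Rightarrow> 'a \<Rightarrow> bool) \<Rightarrow> 'a set \<Rightarrow> ('a \<times> 'a) set \<Rightarrow> enat" where
  "pt_H_forces V E B F = (if \<exists>t. hop_U E B F t = V
      then enat (LEAST t. hop_U E B F t = V) else \<infinity>)"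

definition pt_H :: "'a set \<Rightarrow> ('a \<Rightarrow> 'a \<Rightarrow> bool) \<Rightarrow> 'a set \<Rightarrow> enat" where
  "pt_H V E B = (if hopping_forcing_set V E B
      then (INF F \<in> {F. set_of_forces V E B F}. pt_H_forces V E B F) else \<infinity>)"

definition th_H :: "'a set \<Rightarrow> ('a \<Rightarrow> 'a \<Rightarrow> bool) \<Rightarrow> enat" where
  "th_H V E = (INF B \<in> Pow V. enat (card B) + pt_H V E B)"

end

theory Submission
  imports Defs
begin

text \<open>Fix a set of forces and let \<open>U t\<close> be the vertices blue after round \<open>t\<close>.
  Every vertex of \<open>U (t + 1)\<close> outside \<open>B\<close> has its own forcer, and that forcer has all its
  neighbours in \<open>U t\<close>, i.e. it lies in \<open>U t\<close> but not in the boundary \<open>\<partial>(U t)\<close>. Hence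
  \<open>|U (t + 1)| - |B| \<le> |U t| - |\<partial>(U t)|\<close>. Before the last round some white vertex
  remains while \<open>U t\<close> has a vertex off its boundary, so \<open>\<partial>(U t)\<close> separates the graph and
  \<open>|\<partial>(U t)| \<ge> \<kappa>\<close>. Summing over the \<open>T\<close> rounds gives \<open>n + T\<kappa> \<le> (T + 1)|B|\<close>, i.e.
  \<open>n - \<kappa> \<le> (|B| - \<kappa>)(T + 1)\<close>, and AM-GM turns this into
  \<open>|B| + T \<ge> 2\<surd>(n - \<kappa>) + \<kappa> - 1\<close>.\<close>

lemma hop_valid_forcers:
  "hop_valid V E S D fs \<Longrightarrow>
     distinct (map fst fs) \<and> fst ` set fs \<inter> D = {} \<and> snd ` set fs \<subseteq> V"
proof (induction fs arbitrary: S D)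
  case Nil
  then show ?case by simp
next
  case (Cons f fs)
  obtain v w where f: "f = (v, w)" by fastforce
  with Cons.prems have "hop_step V E S D v w" "hop_valid V E (insert w S) (insert v D) fs"
    by auto
  with Cons.IH show ?case unfolding f hop_step_def by auto
qed

lemma set_of_forces_inj_on_fst:
  assumes "set_of_forces V E B F"
  shows "inj_on fst F" and "snd ` F \<subseteq> V"
proof -
  obtain fs where "hop_valid V E B {} fs" "F = set fs"
    using assms unfolding set_of_forces_def chron_list_def by blast
  with hop_valid_forcers[of V E B "{}" fs] show "inj_on fst F" "snd ` F \<subseteq> V"
    by (auto simp: distinct_map)
qed

lemma pt_H_forces_eq_enatD:
  assumes "pt_H_forces V E B F = enat T"
  shows "hop_U E B F T = V" and "\<And>t. t < T \<Longrightarrow> hop_U E B F t \<noteq> V"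
proof -
  have ex: "\<exists>t. hop_U E B F t = V" and T: "T = (LEAST t. hop_U E B F t = V)"
    using assms unfolding pt_H_forces_def by (auto split: if_splits)
  show "hop_U E B F T = V" unfolding T using ex by (rule LeastI_ex)
  show "\<And>t. t < T \<Longrightarrow> hop_U E B F t \<noteq> V" unfolding T by (rule not_less_Least)
qed

definition boundary :: "('a \<Rightarrow> 'a \<Rightarrow> bool) \<Rightarrow> 'a set \<Rightarrow> 'a set" where
  "boundary E W = {v \<in> W. \<exists>u. E v u \<and> u \<notin> W}"

lemma Diff_boundary_mono: "W \<subseteq> W' \<Longrightarrow> W - boundary E W \<subseteq> W' - boundary E W'"
  unfolding boundary_def by blast

lemma vertex_connectivity_le_card:
  assumes "S \<subseteq> V" and "\<not> connected_on (V - S) E \<or> card (V - S) \<le> 1"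
  shows "vertex_connectivity V E \<le> card S"
  unfolding vertex_connectivity_def using assms by (blast intro: Least_le)

lemma vertex_connectivity_le_card_vertices: "vertex_connectivity V E \<le> card V"
  by (rule vertex_connectivity_le_card) auto

lemma vertex_connectivity_le_card_boundary:
  assumes "W \<subseteq> V" and x: "x \<in> V - W" and y: "y \<in> W - boundary E W"
  shows "vertex_connectivity V E \<le> card (boundary E W)"
proof (rule vertex_connectivity_le_card)
  let ?S = "boundary E W"
  show "?S \<subseteq> V" using \<open>W \<subseteq> V\<close> unfolding boundary_def by blast
  have "z \<in> W - ?S" if "(\<lambda>a b. a \<in> V - ?S \<and> b \<in> V - ?S \<and> E a b)\<^sup>*\<^sup>* y z" for z
    using that
  proof (induction rule: rtranclp_induct)
    case base
    show ?case using y .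
  next
    case (step z z')
    then show ?case unfolding boundary_def by blast
  qed
  moreover have "x \<in> V - ?S" "y \<in> V - ?S"
    using x y \<open>W \<subseteq> V\<close> unfolding boundary_def by auto
  ultimately show "\<not> connected_on (V - ?S) E \<or> card (V - ?S) \<le> 1"
    using x unfolding connected_on_def by blast
qed

locale hopping_forces =
  fixes V :: "'a set" and E :: "'a \<Rightarrow> 'a \<Rightarrow> bool" and B :: "'a set" and F :: "('a \<times> 'a) set"
  assumes finite_V: "finite V"
    and B_subset: "B \<subseteq> V"
    and forced_subset: "snd ` F \<subseteq> V"
    and inj_on_forcer: "inj_on fst F"
begin

abbreviation U :: "nat \<Rightarrow> 'a set" where
  "U t \<equiv> hop_U E B F t"

lemma mem_U_Suc_iff:
  "w \<in> U (Suc t) \<longleftrightarrow> w \<in> U t \<or> (\<exists>v. (v, w) \<in> F \<and> v \<in> U t - boundary E (U t))"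
  by (auto simp: boundary_def)

lemma U_subset: "U t \<subseteq> V"
  by (induction t) (use B_subset forced_subset in force)+

lemma finite_U: "finite (U t)"
  using U_subset finite_V by (rule finite_subset)

lemma U_Suc_subset: "U t \<subseteq> U (Suc t)"
  by auto

lemma B_subset_U: "B \<subseteq> U t"
  using lift_Suc_mono_le[of U, OF U_Suc_subset, of 0 t] by simp

lemma U_stable:
  assumes "U (Suc t) = U t" and "t \<le> s"
  shows "U s = U t"
  using \<open>t \<le> s\<close>
proof (induction s rule: dec_induct)
  case base
  show ?case ..
next
  case (step n)
  have "U (Suc n) = U (Suc t)" by (simp only: hop_U.simps(2) step.IH)
  with assms(1) show ?case by simp
qed

lemma forced_by_interior:
  "w \<in> U (Suc t) - B \<Longrightarrow> \<exists>v. (v, w) \<in> F \<and> v \<in> U t - boundary E (U t)"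
proof (induction t arbitrary: w)
  case 0
  then show ?case by (auto simp only: mem_U_Suc_iff hop_U.simps(1))
next
  case (Suc t)
  show ?case
  proof (cases "w \<in> U (Suc t)")
    case True
    with Suc obtain v where "(v, w) \<in> F" "v \<in> U t - boundary E (U t)" by blast
    with Diff_boundary_mono[OF U_Suc_subset] show ?thesis by blast
  next
    case False
    with Suc.prems show ?thesis by (simp only: mem_U_Suc_iff Diff_iff) blast
  qed
qed

lemma card_growth: "card (U (Suc t) - B) \<le> card (U t - boundary E (U t))"
proof -
  define P where "P = {f \<in> F. snd f \<in> U (Suc t) - B \<and> fst f \<in> U t - boundary E (U t)}"
  have inj: "inj_on fst P" using inj_on_forcer unfolding P_def by (rule inj_on_subset) blast
  have fst_P: "fst ` P \<subseteq> U t - boundary E (U t)" unfolding P_def by blast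
  have "finite P" using finite_subset[OF fst_P] finite_U inj by (blast intro: finite_imageD)
  have "U (Suc t) - B \<subseteq> snd ` P"
    using forced_by_interior unfolding P_def by (force simp: image_iff)
  then have "card (U (Suc t) - B) \<le> card (snd ` P)"
    using \<open>finite P\<close> by (intro card_mono) auto
  also have "\<dots> \<le> card P" using \<open>finite P\<close> by (rule card_image_le)
  also have "\<dots> \<le> card (U t - boundary E (U t))"
    using inj fst_P finite_U by (blast intro: card_inj_on_le)
  finally show ?thesis .
qed

lemma card_U_Suc:
  assumes "U t \<noteq> V" and "U (Suc t) \<noteq> U t"
  shows "card (U (Suc t)) + vertex_connectivity V E \<le> card (U t) + card B"
proof -
  obtain x where x: "x \<in> V - U t" using assms(1) U_subset by blast
  obtain w where "w \<in> U (Suc t) - U t" using assms(2) U_Suc_subset by blast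
  then obtain y where y: "y \<in> U t - boundary E (U t)"
    using forced_by_interior B_subset_U by blast
  have bd_subset: "boundary E (U t) \<subseteq> U t" unfolding boundary_def by blast
  have "vertex_connectivity V E \<le> card (boundary E (U t))"
    using vertex_connectivity_le_card_boundary[OF U_subset x y] .
  moreover have "card (U (Suc t) - B) = card (U (Suc t)) - card B"
    using B_subset_U finite_U by (meson card_Diff_subset finite_subset)
  moreover have "card (U t - boundary E (U t)) = card (U t) - card (boundary E (U t))"
    using bd_subset finite_U by (meson card_Diff_subset finite_subset)
  moreover note card_growth[of t]
  moreover have "card B \<le> card (U (Suc t))" "card (boundary E (U t)) \<le> card (U t)"
    using B_subset_U bd_subset finite_U by (meson card_mono)+
  ultimately show ?thesis by linarith
qed

lemma card_V_bound:
  assumes "pt_H_forces V E B F = enat T"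
  shows "card V + T * vertex_connectivity V E \<le> (T + 1) * card B"
proof -
  note UT = pt_H_forces_eq_enatD(1)[OF assms] and before = pt_H_forces_eq_enatD(2)[OF assms]
  have step: "card (U (Suc t)) + vertex_connectivity V E \<le> card (U t) + card B" if "t < T" for t
  proof (rule card_U_Suc)
    show "U t \<noteq> V" using before that .
    show "U (Suc t) \<noteq> U t"
    proof
      assume "U (Suc t) = U t"
      with U_stable[of t T] that have "U T = U t" by simp
      with UT before that show False by simp
    qed
  qed
  have "card (U t) + t * vertex_connectivity V E \<le> (t + 1) * card B" if "t \<le> T" for t
    using that
  proof (induction t)
    case 0
    then show ?case by simp
  next
    case (Suc t)
    with step[of t] show ?case by simp
  qed
  from this[of T] UT show ?thesis by simp
qed

end

lemma nat_ceiling_two_sqrt_le: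
  fixes n k b T :: nat
  assumes count: "n + T * k \<le> (T + 1) * b" and "k \<le> n"
  shows "nat \<lceil>2 * sqrt (real n - real k) + real k - 1\<rceil> \<le> b + T"
proof -
  have "(T + 1) * k \<le> (T + 1) * b" using assms by simp
  then have "k \<le> b" using mult_le_cancel1[of "T + 1" k b] by linarith
  have "real n + real T * real k \<le> (real T + 1) * real b"
    using count by (metis of_nat_add of_nat_le_iff of_nat_mult of_nat_1)
  then have "sqrt (real n - real k) \<le> sqrt ((real b - real k) * (real T + 1))"
    by (intro real_sqrt_le_mono) (simp add: algebra_simps)
  also have "\<dots> \<le> ((real b - real k) + (real T + 1)) / 2"
    using \<open>k \<le> b\<close> by (intro arith_geo_mean_sqrt) auto
  finally have "2 * sqrt (real n - real k) + real k - 1 \<le> real (b + T)" by simp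
  then show ?thesis by (simp only: nat_ceiling_le_eq)
qed

lemma card_add_pt_H_lower_bound:
  assumes "finite V" and "B \<subseteq> V"
  shows "enat (nat \<lceil>2 * sqrt (real (card V) - real (vertex_connectivity V E))
                     + real (vertex_connectivity V E) - 1\<rceil>) \<le> enat (card B) + pt_H V E B"
    (is "enat ?L \<le> _")
proof (cases "hopping_forcing_set V E B")
  case False
  then show ?thesis by (simp add: pt_H_def)
next
  case True
  have "enat (?L - card B) \<le> pt_H_forces V E B F" if F: "set_of_forces V E B F" for F
  proof (cases "pt_H_forces V E B F")
    case (enat T)
    interpret hopping_forces V E B F
      using assms set_of_forces_inj_on_fst[OF F] by unfold_locales
    have "?L \<le> card B + T"
      using nat_ceiling_two_sqrt_le[OF card_V_bound[OF enat] vertex_connectivity_le_card_vertices] .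
    with enat show ?thesis by simp
  qed simp
  with True have "enat (?L - card B) \<le> pt_H V E B"
    unfolding pt_H_def by (auto intro: INF_greatest)
  then show ?thesis by (cases "pt_H V E B") auto
qed

theorem theorem3p1:
  fixes V :: "'a set" and E :: "'a \<Rightarrow> 'a \<Rightarrow> bool"
  assumes "simple_graph V E"
  shows "th_H V E \<ge> enat (nat \<lceil>2 * sqrt (real (card V) - real (vertex_connectivity V E))
                          + real (vertex_connectivity V E) - 1\<rceil>)"
proof -
  have "finite V" using assms unfolding simple_graph_def by blast
  then show ?thesis
    unfolding th_H_def by (intro INF_greatest card_add_pt_H_lower_bound) auto
qed

end
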